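(* In $U(sl(3))$ let $A=E_{12}$, $B=E_{23}$, $E=E_{13}$, $H^{\mathcal P}=\frac13(2E_{11}-E_{22}-E_{33})$, $H^\perp=\frac13(E_{11}-2E_{22}+E_{33})$, $\sigma=\ln(1+\xi E)$, and for $c\in\mathbb C$, $\sigma_A(c)=\ln(1+\xi cA)$. Then for all $c,\zeta\in\mathbb C$ both $$\mathcal F^{\mathcal P}_{\mathcal{JE}}=e^{H^\perp\otimes\sigma_A(c)}\,e^{\xi A\otimes B}\,e^{H^{\mathcal P}\otimes\sigma}\qquad\text{and}\qquad\mathcal F_{\mathcal{RE}}=e^{\zeta H^\perp\otimes\sigma}\,e^{\xi A\otimes B}\,e^{H^{\mathcal P}\otimes\sigma}$$ are twists for $U(sl(3))$, i.e. invertible elements satisfying $\mathcal F_{12}(\Delta\otimes\mathrm{id})(\mathcal F)=\mathcal F_{23}(\mathrm{id}\otimes\Delta)(\mathcal F)$ and $(\epsilon\otimes\mathrm{id})(\mathcal F)=(\mathrm{id}\otimes\epsilon)(\mathcal F)=1$.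
   Context: Work over $\mathbb C$ with $U=U(sl(3))$, with primitive generators ($\Delta(x)=x\otimes1+1\otimes x$, $\epsilon(x)=0$). $E_{ij}$ are matrix units of $gl(3)$. $\xi$ is a formal parameter and all computations are in the $\xi$-adically completed algebras $U[[\xi]]$, $(U^{\otimes2})[[\xi]]$, $(U^{\otimes3})[[\xi]]$; $\ln(1+\xi X)$ denotes the formal power series $\sum_{m\ge1}(-1)^{m+1}\xi^mX^m/m$. *)

theory Defs
  imports "HOL-Analysis.Analysis" "HOL-Library.Poly_Mapping"
          "HOL-Computational_Algebra.Formal_Power_Series"
begin

typedef sl3 = "{M :: complex^3^3. trace M = 0}"
  by (rule exI[of _ "mat 0"]) (simp add: trace_def)

definition msc :: "complex \<Rightarrow> complex^3^3 \<Rightarrow> complex^3^3" where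
  "msc c M = (\<chi> a b. c * M $ a $ b)"

definition sl_add :: "sl3 \<Rightarrow> sl3 \<Rightarrow> sl3" where
  "sl_add x y = Abs_sl3 (Rep_sl3 x + Rep_sl3 y)"

definition sl_scale :: "complex \<Rightarrow> sl3 \<Rightarrow> sl3" where
  "sl_scale c x = Abs_sl3 (msc c (Rep_sl3 x))"

definition sl_bracket :: "sl3 \<Rightarrow> sl3 \<Rightarrow> sl3" where
  "sl_bracket x y = Abs_sl3 (Rep_sl3 x ** Rep_sl3 y - Rep_sl3 y ** Rep_sl3 x)"

definition mu :: "3 \<Rightarrow> 3 \<Rightarrow> complex^3^3" where
  "mu i j = (\<chi> a b. if a = i \<and> b = j then 1 else 0)"

datatype 'l word = Word "'l list"

primrec unword :: "'l word \<Rightarrow> 'l list" where "unword (Word xs) = xs"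

instantiation word :: (type) monoid_add
begin
definition zero_word :: "'l word" where "zero_word = Word []"
definition plus_word :: "'l word \<Rightarrow> 'l word \<Rightarrow> 'l word" where
  "plus_word v w = Word (unword v @ unword w)"
instance
proof
  fix a b c :: "'l word"
  show "a + b + c = a + (b + c)" by (cases a; cases b; cases c) (simp add: plus_word_def)
  show "0 + a = a" by (cases a) (simp add: plus_word_def zero_word_def)
  show "a + 0 = a" by (cases a) (simp add: plus_word_def zero_word_def)
qed
end

text \<open>Letters (k, x): the element x of sl(3) placed in the k-th tensor factor.
  The free algebra on these letters, modulo the ideal \<open>Irel\<close> below, is
  U(sl(3))^{\<otimes>\<infinity>} (restricted tensor power); its subalgebra generated by letters
  with k < n is U(sl(3))^{\<otimes>n}.\<close>
type_synonym letter = "nat \<times> sl3"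
type_synonym FA = "letter word \<Rightarrow>\<^sub>0 complex"
type_synonym UF = "FA fps"   \<comment> \<open>xi-adically completed algebra, coefficientwise\<close>

definition scal :: "complex \<Rightarrow> FA" where
  "scal c = Poly_Mapping.single (Word []) c"

definition L :: "nat \<Rightarrow> sl3 \<Rightarrow> FA" where
  "L k x = Poly_Mapping.single (Word [(k, x)]) 1"

inductive_set Irel :: "FA set" where
  lin_add: "L k (sl_add x y) - L k x - L k y \<in> Irel"
| lin_scale: "L k (sl_scale c x) - scal c * L k x \<in> Irel"
| lie: "L k x * L k y - L k y * L k x - L k (sl_bracket x y) \<in> Irel"
| comm: "k \<noteq> l \<Longrightarrow> L k x * L l y - L l y * L k x \<in> Irel"
| zero: "0 \<in> Irel"
| add: "a \<in> Irel \<Longrightarrow> b \<in> Irel \<Longrightarrow> a + b \<in> Irel"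
| mult: "a \<in> Irel \<Longrightarrow> p * a * q \<in> Irel"

definition eqv :: "UF \<Rightarrow> UF \<Rightarrow> bool" where
  "eqv F G \<longleftrightarrow> (\<forall>n. fps_nth F n - fps_nth G n \<in> Irel)"

definition fa_hom :: "(letter \<Rightarrow> FA) \<Rightarrow> FA \<Rightarrow> FA" where
  "fa_hom \<phi> p = (\<Sum>w\<in>Poly_Mapping.keys p. scal (Poly_Mapping.lookup p w) * prod_list (map \<phi> (unword w)))"

definition uf_hom :: "(letter \<Rightarrow> FA) \<Rightarrow> UF \<Rightarrow> UF" where
  "uf_hom \<phi> F = Abs_fps (\<lambda>n. fa_hom \<phi> (fps_nth F n))"

definition leg :: "nat \<Rightarrow> UF \<Rightarrow> UF" where
  "leg k = uf_hom (\<lambda>(i, x). L (i + k) x)"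

definition tens2 :: "UF \<Rightarrow> UF \<Rightarrow> UF" where
  "tens2 X Y = leg 0 X * leg 1 Y"

text \<open>exp and ln(1+_) of power series without constant term.\<close>
definition fexp :: "UF \<Rightarrow> UF" where
  "fexp X = Abs_fps (\<lambda>n. \<Sum>m\<le>n. scal (1 / of_nat (fact m)) * (fps_nth (X ^ m) n))"

definition fln1 :: "UF \<Rightarrow> UF" where
  "fln1 X = Abs_fps (\<lambda>n. \<Sum>m\<in>{1..n}. scal ((-1) ^ (m + 1) / of_nat m) * (fps_nth (X ^ m) n))"

definition Delta_id :: "UF \<Rightarrow> UF" where
  "Delta_id = uf_hom (\<lambda>(i, x). if i = 0 then L 0 x + L 1 x else L (i + 1) x)"

definition id_Delta :: "UF \<Rightarrow> UF" where
  "id_Delta = uf_hom (\<lambda>(i, x). if i = 0 then L 0 x else if i = 1 then L 1 x + L 2 x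
                               else L (i + 1) x)"

definition leg12 :: "UF \<Rightarrow> UF" where
  "leg12 = uf_hom (\<lambda>(i, x). L i x)"

definition leg23 :: "UF \<Rightarrow> UF" where
  "leg23 = uf_hom (\<lambda>(i, x). L (i + 1) x)"

definition eps_id :: "UF \<Rightarrow> UF" where
  "eps_id = uf_hom (\<lambda>(i, x). if i = 0 then 0 else L (i - 1) x)"

definition id_eps :: "UF \<Rightarrow> UF" where
  "id_eps = uf_hom (\<lambda>(i, x). if i = 1 then 0 else if i = 0 then L 0 x else L (i - 1) x)"

definition is_twist :: "UF \<Rightarrow> bool" where
  "is_twist F \<longleftrightarrow>
     (\<exists>G. eqv (F * G) 1 \<and> eqv (G * F) 1) \<and>
     eqv (leg12 F * Delta_id F) (leg23 F * id_Delta F) \<and>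
     eqv (eps_id F) 1 \<and> eqv (id_eps F) 1"

definition Aelt :: sl3 where "Aelt = Abs_sl3 (mu 1 2)"
definition Belt :: sl3 where "Belt = Abs_sl3 (mu 2 3)"
definition Eelt :: sl3 where "Eelt = Abs_sl3 (mu 1 3)"
definition HP :: sl3 where
  "HP = Abs_sl3 (msc (1/3) (msc 2 (mu 1 1) - mu 2 2 - mu 3 3))"
definition Hperp :: sl3 where
  "Hperp = Abs_sl3 (msc (1/3) (mu 1 1 - msc 2 (mu 2 2) + mu 3 3))"

definition U :: "sl3 \<Rightarrow> UF" where "U x = fps_const (L 0 x)"
definition Uc :: "complex \<Rightarrow> UF" where "Uc c = fps_const (scal c)"

definition sigma :: UF where "sigma = fln1 (fps_X * U Eelt)"
definition sigmaA :: "complex \<Rightarrow> UF" where "sigmaA c = fln1 (fps_X * Uc c * U Aelt)"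

definition F_JE :: "complex \<Rightarrow> UF" where
  "F_JE c = fexp (tens2 (U Hperp) (sigmaA c)) * fexp (fps_X * tens2 (U Aelt) (U Belt))
            * fexp (tens2 (U HP) sigma)"

definition F_RE :: "complex \<Rightarrow> UF" where
  "F_RE \<zeta> = fexp (tens2 (Uc \<zeta> * U Hperp) sigma) * fexp (fps_X * tens2 (U Aelt) (U Belt))
            * fexp (tens2 (U HP) sigma)"

end

theory Submission
  imports Defs
begin

text \<open>Write \<open>F = P \<Phi>\<close>, where \<open>\<Phi> = exp (\<xi> A \<otimes> B) exp (H\<^sup>\<P> \<otimes> \<sigma>)\<close> is the
  extended Jordanian twist and \<open>P\<close> is the remaining \<open>H\<^sup>\<perp>\<close>-factor. Everything is computed in
  \<open>U(sl(3))\<^sup>\<otimes>\<^sup>3[[\<xi>]]\<close>, where \<open>exp\<close> and \<open>ln (1 + _)\<close> of series without constant term are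
  substitutions into complex power series; hence \<open>exp (ln (1 + y)) = 1 + y\<close>, \<open>exp\<close> is additive
  on commuting arguments, and \<open>exp X\<close> conjugates \<open>Y\<close> into \<open>Y + [X, Y]\<close> when \<open>[X, Y]\<close> commutes
  with \<open>X\<close>. Consequently the Jordanian factor \<open>exp (h \<otimes> ln (1 + \<xi> e))\<close> with \<open>[h, e] = e\<close> is a
  twist, and conjugating by it multiplies an eigenvector \<open>a\<close> of \<open>ad h\<close> with eigenvalue 1 by
  \<open>1 + \<xi> e\<close>. This moves \<open>exp (\<xi> A \<otimes> B)\<close> through the Jordanian factors and gives the twist
  equation for \<open>\<Phi>\<close>; the one for \<open>P \<Phi>\<close> follows because \<open>P\<close> satisfies the twist equation of the
  \<open>\<Phi>\<close>-twisted coproduct (a Jordanian identity for \<open>F\<^sub>J\<^sub>E\<close>, additivity of \<open>exp\<close> for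
  \<open>F\<^sub>R\<^sub>E\<close>). The counit conditions are immediate, and \<open>F\<close> is invertible as a product of
  exponentials.\<close>

section \<open>Power series over a ring with central complex scalars\<close>

lemma binomial_commuting:
  fixes x y :: "'a::semiring_1"
  assumes xy: "x * y = y * x"
  shows "(x + y) ^ n = (\<Sum>k\<le>n. of_nat (n choose k) * x ^ k * y ^ (n - k))"
proof (induct n)
  case (Suc n)
  have yx: "y * (x ^ k * z) = x ^ k * (y * z)" for k z
    using power_commuting_commutes[OF xy, of k] by (simp add: mult.assoc[symmetric])
  have nat_commute: "w * (of_nat c * z) = of_nat c * (w * z)" for w z :: 'a and c :: nat
    by (metis mult.assoc mult_of_nat_commute)
  have "(x + y) ^ Suc n =
      (\<Sum>k\<le>n. of_nat (n choose k) * x ^ Suc k * y ^ (n - k)) +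
      (\<Sum>k\<le>n. of_nat (n choose k) * x ^ k * y ^ Suc (n - k))"
    by (simp add: Suc distrib_right distrib_left sum_distrib_left sum.distrib mult.assoc
        yx nat_commute)
  also have "\<dots> = (\<Sum>k\<le>Suc n. of_nat (Suc n choose k) * x ^ k * y ^ (Suc n - k))"
  proof -
    let ?f = "\<lambda>k. of_nat (n choose k) * x ^ k * y ^ (Suc n - k)"
    have "(\<Sum>k\<le>n. ?f k) = (\<Sum>k\<le>Suc n. ?f k)"
      by (simp add: binomial_eq_0)
    then have "(\<Sum>k\<le>n. ?f k) =
        y ^ Suc n + (\<Sum>k\<le>n. of_nat (n choose Suc k) * x ^ Suc k * y ^ (n - k))"
      by (simp only: sum.atMost_Suc_shift) simp
    then show ?thesis
      by (simp only: sum.atMost_Suc_shift) (simp add: distrib_right sum.distrib Suc_diff_le add_ac)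
  qed
  finally show ?case .
qed simp

lemma power_intertwine:
  fixes g Y Y' :: "'a::monoid_mult"
  assumes "g * Y = Y' * g"
  shows "g * Y ^ m = Y' ^ m * g"
proof (induct m)
  case (Suc m)
  then show ?case
    by (metis (no_types) assms mult.assoc power_Suc2)
qed simp

lemma power_commutator_central:
  fixes X Y C :: "'a::ring_1"
  assumes XY: "X * Y = Y * X + C" and XC: "X * C = C * X"
  shows "X ^ Suc m * Y = Y * X ^ Suc m + of_nat (Suc m) * C * X ^ m"
proof (induct m)
  case (Suc m)
  have of_nat_left: "X * (of_nat k * Z) = of_nat k * (X * Z)" for k Z
    by (metis mult.assoc mult_of_nat_commute)
  have "X ^ Suc (Suc m) * Y = X * (X ^ Suc m * Y)"
    by (simp only: power_Suc mult.assoc)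
  also have "\<dots> = X * Y * X ^ Suc m + of_nat (Suc m) * (X * C * X ^ m)"
    by (simp only: Suc distrib_left mult.assoc of_nat_left)
  also have "\<dots> = Y * X ^ Suc (Suc m) + C * X ^ Suc m + of_nat (Suc m) * (C * X ^ Suc m)"
    by (simp only: XY XC distrib_right mult.assoc power_Suc)
  also have "\<dots> = Y * X ^ Suc (Suc m) + of_nat (Suc (Suc m)) * C * X ^ Suc m"
    by (simp add: algebra_simps)
  finally show ?case .
qed (simp add: XY)

definition commute :: "'a::times \<Rightarrow> 'a \<Rightarrow> bool" where
  "commute a b \<longleftrightarrow> a * b = b * a"

lemma commute_sym: "commute a b \<Longrightarrow> commute b a"
  by (simp add: commute_def)

lemma commute_refl: "commute a a"
  by (simp add: commute_def)

lemma commute_1_left: "commute 1 (a :: 'a::monoid_mult)"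
  and commute_1_right: "commute a (1 :: 'a::monoid_mult)"
  by (simp_all add: commute_def)

lemma commute_mult_left:
  "commute a c \<Longrightarrow> commute b c \<Longrightarrow> commute (a * b) (c :: 'a::semigroup_mult)"
  by (simp add: commute_def) (metis mult.assoc)

lemma commute_mult_right:
  "commute a b \<Longrightarrow> commute a c \<Longrightarrow> commute a (b * c :: 'a::semigroup_mult)"
  by (simp add: commute_def) (metis mult.assoc)

lemma commute_add_left: "commute a c \<Longrightarrow> commute b c \<Longrightarrow> commute (a + b) (c :: 'a::semiring)"
  and commute_add_right: "commute a b \<Longrightarrow> commute a c \<Longrightarrow> commute a (b + c)"
  by (simp_all add: commute_def distrib_left distrib_right)

lemma commute_fps_X_left: "commute fps_X (a :: 'a::ring_1 fps)"
  and commute_fps_X_right: "commute a (fps_X :: 'a::ring_1 fps)"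
  by (simp_all add: commute_def fps_mult_fps_X_commute)

lemma intertwine_mult:
  fixes g a b :: "'a::semigroup_mult"
  assumes "g * a = a' * g" "g * b = b' * g"
  shows "g * (a * b) = (a' * b') * g"
proof -
  have "g * (a * b) = a' * (g * b)"
    by (simp only: mult.assoc[symmetric] assms(1))
  also have "\<dots> = (a' * b') * g"
    by (simp only: assms(2) mult.assoc)
  finally show ?thesis .
qed

text \<open>If \<open>F\<close> satisfies the twist equation and \<open>P\<close> satisfies it for the coproduct twisted
  by \<open>F\<close> (\<open>F01\<close> conjugates \<open>P2\<close> into \<open>P2'\<close> and \<open>F12\<close> conjugates \<open>Q0\<close> into \<open>R\<close>),
  then \<open>P * F\<close> satisfies the twist equation.\<close>

lemma twist_product:
  fixes P01 P2 P2' P12 R Q0 F01 F2 F12 F0 :: "'a::semigroup_mult"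
  assumes "F01 * F2 = F12 * F0" "F01 * P2 = P2' * F01" "P01 * P2' = P12 * R" "R * F12 = F12 * Q0"
  shows "(P01 * F01) * (P2 * F2) = (P12 * F12) * (Q0 * F0)"
  by (metis assms mult.assoc)

locale central_scalars =
  fixes sc :: "complex \<Rightarrow> 'a::ring_1"
  assumes sc_add: "sc (a + b) = sc a + sc b"
    and sc_mult: "sc (a * b) = sc a * sc b"
    and sc_1 [simp]: "sc 1 = 1"
    and sc_commute: "sc a * x = x * sc a"
begin

lemma sc_0 [simp]: "sc 0 = 0"
  using sc_add[of 0 0] by simp

lemma sc_diff: "sc (a - b) = sc a - sc b"
  using sc_add[of "a - b" b] by (simp add: eq_diff_eq)

lemma sc_uminus: "sc (- a) = - sc a"
  using sc_diff[of 0 a] by simp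

lemma sc_sum: "sc (\<Sum>i\<in>I. f i) = (\<Sum>i\<in>I. sc (f i))"
  by (induct I rule: infinite_finite_induct) (simp_all add: sc_add)

lemma sc_of_nat: "sc (of_nat n) = of_nat n"
  by (induct n) (simp_all add: sc_add)

lemma fps_const_sc_commute: "fps_const (sc a) * F = F * fps_const (sc a)"
  by (rule fps_ext) (simp add: sc_commute)

lemma fps_const_sc_shuffle:
  "fps_const (sc a) * F * (fps_const (sc b) * G) = fps_const (sc (a * b)) * (F * G)"
  by (metis fps_const_mult fps_const_sc_commute mult.assoc sc_mult)

text \<open>The inner sum is truncated at \<open>m \<le> n\<close>, so this computes \<open>f(Y)\<close> only when \<open>Y\<close> has no
  constant term; that is assumed wherever it matters.\<close>

definition subst_fps :: "complex fps \<Rightarrow> 'a fps \<Rightarrow> 'a fps" where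
  "subst_fps f Y = Abs_fps (\<lambda>n. \<Sum>m\<le>n. sc (fps_nth f m) * fps_nth (Y ^ m) n)"

definition subst_poly :: "complex fps \<Rightarrow> 'a fps \<Rightarrow> nat \<Rightarrow> 'a fps" where
  "subst_poly f Y N = (\<Sum>m\<le>N. fps_const (sc (fps_nth f m)) * Y ^ m)"

abbreviation exp_fps :: "'a fps \<Rightarrow> 'a fps" where
  "exp_fps Y \<equiv> subst_fps (fps_exp 1) Y"

abbreviation ln1_fps :: "'a fps \<Rightarrow> 'a fps" where
  "ln1_fps Y \<equiv> subst_fps (fps_ln 1) Y"

lemma subst_fps_nth: "fps_nth (subst_fps f Y) n = (\<Sum>m\<le>n. sc (fps_nth f m) * fps_nth (Y ^ m) n)"
  by (simp add: subst_fps_def)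

lemma subst_fps_nth_0 [simp]: "fps_nth (subst_fps f Y) 0 = sc (fps_nth f 0)"
  by (simp add: subst_fps_nth)

lemma subst_poly_nth: "fps_nth (subst_poly f Y N) n = (\<Sum>m\<le>N. sc (fps_nth f m) * fps_nth (Y ^ m) n)"
  by (simp add: subst_poly_def fps_sum_nth)

lemma cutoff_subst_fps:
  assumes "fps_nth Y 0 = 0" "n \<le> N"
  shows "fps_cutoff (Suc n) (subst_fps f Y) = fps_cutoff (Suc n) (subst_poly f Y N)"
proof (rule fps_ext)
  fix k
  have "fps_nth (subst_fps f Y) k = fps_nth (subst_poly f Y N) k" if "k \<le> n"
    unfolding subst_fps_nth subst_poly_nth
    by (rule sum.mono_neutral_left)
      (use assms that startsby_zero_power_prefix[OF assms(1)] in \<open>auto simp: not_le\<close>)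
  then show "fps_nth (fps_cutoff (Suc n) (subst_fps f Y)) k = fps_nth (fps_cutoff (Suc n) (subst_poly f Y N)) k"
    by simp
qed

lemma nth_mult_subst_fps_left:
  assumes "fps_nth Y 0 = 0" "n \<le> N"
  shows "fps_nth (subst_fps f Y * G) n = fps_nth (subst_poly f Y N * G) n"
  by (metis assms cutoff_subst_fps fps_cutoff_left_mult_nth lessI)

lemma nth_mult_subst_fps_right:
  assumes "fps_nth Y 0 = 0" "n \<le> N"
  shows "fps_nth (G * subst_fps f Y) n = fps_nth (G * subst_poly f Y N) n"
  by (metis assms cutoff_subst_fps fps_cutoff_right_mult_nth lessI)

lemma subst_poly_intertwine:
  assumes "g * Y = Y' * g"
  shows "g * subst_poly f Y N = subst_poly f Y' N * g"
proof -
  have "g * (fps_const (sc c) * Y ^ m) = fps_const (sc c) * Y' ^ m * g" for c m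
    by (metis fps_const_sc_commute mult.assoc power_intertwine[OF assms])
  then show ?thesis
    by (simp add: subst_poly_def sum_distrib_left sum_distrib_right)
qed

lemma subst_fps_intertwine:
  assumes "g * Y = Y' * g" "fps_nth Y 0 = 0" "fps_nth Y' 0 = 0"
  shows "g * subst_fps f Y = subst_fps f Y' * g"
proof (rule fps_ext)
  fix n
  have "fps_nth (g * subst_fps f Y) n = fps_nth (g * subst_poly f Y n) n"
    using assms(2) by (rule nth_mult_subst_fps_right) simp
  also have "\<dots> = fps_nth (subst_poly f Y' n * g) n"
    by (simp only: subst_poly_intertwine[OF assms(1)])
  also have "\<dots> = fps_nth (subst_fps f Y' * g) n"
    using assms(3) by (rule nth_mult_subst_fps_left[symmetric]) simp
  finally show "fps_nth (g * subst_fps f Y) n = fps_nth (subst_fps f Y' * g) n" .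
qed

lemma nth_mult_subst_fps:
  assumes X0: "fps_nth X 0 = 0" and Y0: "fps_nth Y 0 = 0"
  shows "fps_nth (subst_fps f X * subst_fps g Y) n =
    (\<Sum>(i, j)\<in>{(i, j). i + j \<le> n}. sc (fps_nth f i * fps_nth g j) * fps_nth (X ^ i * Y ^ j) n)"
proof -
  have vanish: "fps_nth (X ^ i * Y ^ j) n = 0" if "n < i + j" for i j
  proof -
    have "fps_nth (X ^ i * Y ^ j) n = (\<Sum>k=0..n. fps_nth (X ^ i) k * fps_nth (Y ^ j) (n - k))"
      by (rule fps_mult_nth)
    also have "\<dots> = 0"
    proof (rule sum.neutral, rule ballI)
      fix k assume "k \<in> {0..n}"
      then have "k < i \<or> n - k < j" using that by auto
      then show "fps_nth (X ^ i) k * fps_nth (Y ^ j) (n - k) = 0"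
        using startsby_zero_power_prefix[OF X0, of i] startsby_zero_power_prefix[OF Y0, of j] by auto
    qed
    finally show ?thesis .
  qed
  have "fps_nth (subst_fps f X * subst_fps g Y) n = fps_nth (subst_poly f X n * subst_poly g Y n) n"
    by (simp add: nth_mult_subst_fps_left[OF X0 order.refl]
        nth_mult_subst_fps_right[OF Y0 order.refl])
  also have "\<dots> = (\<Sum>i\<le>n. \<Sum>j\<le>n. sc (fps_nth f i * fps_nth g j) * fps_nth (X ^ i * Y ^ j) n)"
    by (simp add: subst_poly_def sum_product fps_sum_nth fps_const_sc_shuffle)
  also have "\<dots> = (\<Sum>(i, j)\<in>{..n} \<times> {..n}. sc (fps_nth f i * fps_nth g j) * fps_nth (X ^ i * Y ^ j) n)"
    by (rule sum.cartesian_product)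
  also have "\<dots> = (\<Sum>(i, j)\<in>{(i, j). i + j \<le> n}. sc (fps_nth f i * fps_nth g j) * fps_nth (X ^ i * Y ^ j) n)"
    by (rule sum.mono_neutral_right) (auto, metis vanish not_le mult_zero_right)
  finally show ?thesis .
qed

lemma subst_fps_mult:
  assumes Y0: "fps_nth Y 0 = 0"
  shows "subst_fps (f * g) Y = subst_fps f Y * subst_fps g Y"
proof (rule fps_ext)
  fix n
  let ?t = "\<lambda>i j. sc (fps_nth f i * fps_nth g j) * fps_nth (Y ^ i * Y ^ j) n"
  have "fps_nth (subst_fps (f * g) Y) n = (\<Sum>m\<le>n. \<Sum>i\<le>m. ?t i (m - i))"
    by (simp add: subst_fps_nth fps_mult_nth sc_sum sum_distrib_right atLeast0AtMost
        flip: power_add)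
  also have "\<dots> = (\<Sum>(i, j)\<in>{(i, j). i + j \<le> n}. ?t i j)"
    by (rule sum.triangle_reindex_eq[symmetric])
  also have "\<dots> = fps_nth (subst_fps f Y * subst_fps g Y) n"
    by (rule nth_mult_subst_fps[OF Y0 Y0, symmetric])
  finally show "fps_nth (subst_fps (f * g) Y) n = fps_nth (subst_fps f Y * subst_fps g Y) n" .
qed

lemma subst_fps_const: "subst_fps (fps_const c) Y = fps_const (sc c)"
proof (rule fps_ext)
  fix n
  have "(\<Sum>m\<le>n. sc (fps_nth (fps_const c) m) * fps_nth (Y ^ m) n) =
      (\<Sum>m\<in>{0}. sc (fps_nth (fps_const c) m) * fps_nth (Y ^ m) n)"
    by (rule sum.mono_neutral_right) auto
  then show "fps_nth (subst_fps (fps_const c) Y) n = fps_nth (fps_const (sc c)) n"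
    by (simp add: subst_fps_nth)
qed

lemma subst_fps_1 [simp]: "subst_fps 1 Y = 1"
  using subst_fps_const[of 1 Y] by simp

lemma subst_fps_X:
  assumes "fps_nth Y 0 = 0"
  shows "subst_fps fps_X Y = Y"
proof (rule fps_ext)
  fix n
  have "(\<Sum>m\<le>n. sc (fps_nth fps_X m) * fps_nth (Y ^ m) n) =
      (\<Sum>m\<in>{1}. sc (fps_nth fps_X m) * fps_nth (Y ^ m) n)" if "n > 0"
    by (rule sum.mono_neutral_right) (use that in auto)
  then show "fps_nth (subst_fps fps_X Y) n = fps_nth Y n"
    using assms by (cases "n = 0") (simp_all add: subst_fps_nth)
qed

lemma subst_fps_add: "subst_fps (f + g) Y = subst_fps f Y + subst_fps g Y"
  by (rule fps_ext) (simp add: subst_fps_nth sc_add distrib_right sum.distrib)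

lemma subst_fps_diff: "subst_fps (f - g) Y = subst_fps f Y - subst_fps g Y"
  by (rule fps_ext) (simp add: subst_fps_nth sc_diff left_diff_distrib sum_subtractf)

lemma subst_fps_power:
  assumes "fps_nth Y 0 = 0"
  shows "subst_fps (f ^ i) Y = subst_fps f Y ^ i"
  by (induct i) (simp_all add: subst_fps_mult[OF assms])

lemma subst_fps_compose:
  assumes Y0: "fps_nth Y 0 = 0" and g0: "fps_nth g 0 = 0"
  shows "subst_fps (f oo g) Y = subst_fps f (subst_fps g Y)"
proof (rule fps_ext)
  fix n
  let ?t = "\<lambda>i m. sc (fps_nth f i) * (sc (fps_nth (g ^ i) m) * fps_nth (Y ^ m) n)"
  have "fps_nth (subst_fps (f oo g) Y) n = (\<Sum>m\<le>n. \<Sum>i\<le>m. ?t i m)"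
    by (simp add: subst_fps_nth fps_compose_nth sc_sum sc_mult sum_distrib_right
        atLeast0AtMost mult.assoc)
  also have "\<dots> = (\<Sum>m\<le>n. \<Sum>i\<le>n. ?t i m)"
    by (intro sum.cong refl sum.mono_neutral_left)
      (use startsby_zero_power_prefix[OF g0] in \<open>auto simp: not_le\<close>)
  also have "\<dots> = (\<Sum>i\<le>n. sc (fps_nth f i) * fps_nth (subst_fps g Y ^ i) n)"
    by (subst sum.swap) (simp add: sum_distrib_left subst_fps_nth flip: subst_fps_power[OF Y0])
  also have "\<dots> = fps_nth (subst_fps f (subst_fps g Y)) n"
    by (simp add: subst_fps_nth)
  finally show "fps_nth (subst_fps (f oo g) Y) n = fps_nth (subst_fps f (subst_fps g Y)) n" .
qed

lemma exp_fps_ln1_fps: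
  assumes "fps_nth Y 0 = 0"
  shows "exp_fps (ln1_fps Y) = 1 + Y"
proof -
  have "(fps_exp (1 :: complex) - 1) oo fps_ln 1 = fps_X"
    by (simp add: fps_ln_fps_exp_inv fps_inv_right)
  then have "fps_exp (1 :: complex) oo fps_ln 1 = 1 + fps_X"
    by (simp add: fps_compose_sub_distrib algebra_simps)
  then show ?thesis
    using assms by (simp add: subst_fps_compose[symmetric] subst_fps_add subst_fps_X)
qed

lemma ln1_fps_exp_fps:
  assumes "fps_nth W 0 = 0"
  shows "ln1_fps (exp_fps W - 1) = W"
proof -
  have "fps_ln (1 :: complex) oo (fps_exp 1 - 1) = fps_X"
    by (simp add: fps_ln_fps_exp_inv fps_inv)
  moreover have "exp_fps W - 1 = subst_fps (fps_exp 1 - 1) W"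
    by (simp add: subst_fps_diff)
  ultimately show ?thesis
    using assms by (simp add: subst_fps_compose[symmetric] subst_fps_X)
qed

lemma subst_fps_0: "subst_fps f 0 = fps_const (sc (fps_nth f 0))"
proof (rule fps_ext)
  fix n
  have "(\<Sum>m\<le>n. sc (fps_nth f m) * fps_nth ((0 :: 'a fps) ^ m) n) =
      (\<Sum>m\<in>{0}. sc (fps_nth f m) * fps_nth ((0 :: 'a fps) ^ m) n)"
    by (rule sum.mono_neutral_right) (auto simp: power_0_left)
  then show "fps_nth (subst_fps f 0) n = fps_nth (fps_const (sc (fps_nth f 0))) n"
    by (simp add: subst_fps_nth)
qed

lemma exp_fps_add:
  assumes "X * Y = Y * X" "fps_nth X 0 = 0" "fps_nth Y 0 = 0"
  shows "exp_fps (X + Y) = exp_fps X * exp_fps Y"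
proof (rule fps_ext)
  fix n
  let ?t = "\<lambda>i j. sc (fps_nth (fps_exp 1) i * fps_nth (fps_exp 1) j) * fps_nth (X ^ i * Y ^ j) n"
  have coeff: "of_nat (m choose i) / fact m = 1 / (fact i * fact (m - i) :: complex)"
    if "i \<le> m" for i m
    using that by (simp add: binomial_fact field_simps)
  have "fps_nth (exp_fps (X + Y)) n =
      (\<Sum>m\<le>n. sc (1 / fact m) * (\<Sum>i\<le>m. sc (of_nat (m choose i)) * fps_nth (X ^ i * Y ^ (m - i)) n))"
    by (simp add: subst_fps_nth binomial_commuting[OF assms(1)] fps_sum_nth sc_of_nat
        mult.assoc fps_of_nat)
  also have "\<dots> = (\<Sum>m\<le>n. \<Sum>i\<le>m. ?t i (m - i))"
    by (simp add: sum_distrib_left mult.assoc[symmetric] coeff flip: sc_mult)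
  also have "\<dots> = (\<Sum>(i, j)\<in>{(i, j). i + j \<le> n}. ?t i j)"
    by (rule sum.triangle_reindex_eq[symmetric])
  also have "\<dots> = fps_nth (exp_fps X * exp_fps Y) n"
    by (rule nth_mult_subst_fps[OF assms(2,3), symmetric])
  finally show "fps_nth (exp_fps (X + Y)) n = fps_nth (exp_fps X * exp_fps Y) n" .
qed

lemma exp_fps_0 [simp]: "exp_fps 0 = 1"
  by (simp add: subst_fps_0)

lemma ln1_fps_0 [simp]: "ln1_fps 0 = 0"
  by (simp add: subst_fps_0)

lemma exp_fps_uminus:
  assumes "fps_nth X 0 = 0"
  shows "exp_fps X * exp_fps (- X) = 1" "exp_fps (- X) * exp_fps X = 1"
  using exp_fps_add[of X "- X"] exp_fps_add[of "- X" X] assms by simp_all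

lemma subst_poly_exp_commutator_central:
  assumes XY: "X * Y = Y * X + C" and XC: "X * C = C * X"
  shows "subst_poly (fps_exp 1) X (Suc N) * Y =
    Y * subst_poly (fps_exp 1) X (Suc N) + C * subst_poly (fps_exp 1) X N"
proof -
  let ?c = "\<lambda>m. fps_const (sc (fps_nth (fps_exp 1) m))"
  have step: "?c (Suc m) * X ^ Suc m * Y = Y * (?c (Suc m) * X ^ Suc m) + C * (?c m * X ^ m)" for m
  proof -
    have "(of_nat (Suc m) :: complex) \<noteq> 0"
      by (rule of_nat_neq_0)
    then have "fps_nth (fps_exp 1) (Suc m) * of_nat (Suc m) = (fps_nth (fps_exp 1) m :: complex)"
      by (simp only: fps_exp_nth power_one fact_Suc of_nat_mult) simp
    then have coeff: "?c (Suc m) * of_nat (Suc m) = ?c m"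
      by (metis fps_of_nat fps_const_mult sc_of_nat sc_mult)
    have "?c (Suc m) * X ^ Suc m * Y =
        ?c (Suc m) * Y * X ^ Suc m + ?c (Suc m) * of_nat (Suc m) * C * X ^ m"
      by (simp only: mult.assoc power_commutator_central[OF XY XC] distrib_left)
    also have "\<dots> = Y * (?c (Suc m) * X ^ Suc m) + C * (?c m * X ^ m)"
      by (simp only: coeff fps_const_sc_commute[of _ Y] fps_const_sc_commute[of _ C] mult.assoc)
    finally show ?thesis .
  qed
  have split: "subst_poly (fps_exp 1) X (Suc N) = 1 + (\<Sum>m\<le>N. ?c (Suc m) * X ^ Suc m)"
    by (simp only: subst_poly_def sum.atMost_Suc_shift) simp
  show ?thesis
    unfolding split
    by (simp only: subst_poly_def distrib_left distrib_right sum_distrib_left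
        sum_distrib_right step sum.distrib mult_1_left mult_1_right add.assoc)
qed

lemma exp_fps_commutator_central:
  assumes XY: "X * Y = Y * X + C" and XC: "X * C = C * X" and X0: "fps_nth X 0 = 0"
  shows "exp_fps X * Y = (Y + C) * exp_fps X"
proof (rule fps_ext)
  fix n
  have "fps_nth (exp_fps X * Y) n = fps_nth (subst_poly (fps_exp 1) X (Suc n) * Y) n"
    using X0 by (rule nth_mult_subst_fps_left) simp
  also have "\<dots> = fps_nth (Y * subst_poly (fps_exp 1) X (Suc n)) n +
      fps_nth (C * subst_poly (fps_exp 1) X n) n"
    by (simp add: subst_poly_exp_commutator_central[OF XY XC])
  also have "\<dots> = fps_nth ((Y + C) * exp_fps X) n"
    using nth_mult_subst_fps_right[OF X0, of n "Suc n"] nth_mult_subst_fps_right[OF X0, of n n]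
    by (simp add: distrib_right)
  finally show "fps_nth (exp_fps X * Y) n = fps_nth ((Y + C) * exp_fps X) n" .
qed

lemma commute_fps_const_sc_left: "commute (fps_const (sc c)) F"
  and commute_fps_const_sc_right: "commute F (fps_const (sc c))"
  by (simp_all add: commute_def fps_const_sc_commute)

lemma commute_subst_fps_right:
  "commute G Y \<Longrightarrow> fps_nth Y 0 = 0 \<Longrightarrow> commute G (subst_fps f Y)"
  by (simp add: commute_def subst_fps_intertwine)

lemma commute_subst_fps_left:
  "commute Y G \<Longrightarrow> fps_nth Y 0 = 0 \<Longrightarrow> commute (subst_fps f Y) G"
  using commute_subst_fps_right commute_sym by blast

lemmas commute_intros = commute_refl commute_1_left commute_1_right
  commute_mult_left commute_mult_right commute_add_left commute_add_right
  commute_fps_X_left commute_fps_X_right commute_fps_const_sc_left commute_fps_const_sc_right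
  commute_subst_fps_left commute_subst_fps_right

lemma exp_fps_add_commute:
  "commute X Y \<Longrightarrow> fps_nth X 0 = 0 \<Longrightarrow> fps_nth Y 0 = 0 \<Longrightarrow>
    exp_fps (X + Y) = exp_fps X * exp_fps Y"
  by (rule exp_fps_add) (simp_all add: commute_def)

lemma ln1_fps_add_mult:
  assumes "commute y1 y2" "fps_nth y1 0 = 0" "fps_nth y2 0 = 0"
  shows "ln1_fps (y1 + y2 + y1 * y2) = ln1_fps y1 + ln1_fps y2"
proof -
  have "exp_fps (ln1_fps y1 + ln1_fps y2) = exp_fps (ln1_fps y1) * exp_fps (ln1_fps y2)"
    using assms by (intro exp_fps_add_commute commute_intros) simp_all
  also have "\<dots> = 1 + (y1 + y2 + y1 * y2)"
    using assms by (simp add: exp_fps_ln1_fps algebra_simps)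
  finally have "ln1_fps (y1 + y2 + y1 * y2) = ln1_fps (exp_fps (ln1_fps y1 + ln1_fps y2) - 1)"
    by simp
  also have "\<dots> = ln1_fps y1 + ln1_fps y2"
    by (rule ln1_fps_exp_fps) simp
  finally show ?thesis .
qed

lemma exp_ln1_conj_eigen:
  assumes hy: "h * y = y * h + y" and hz: "commute h z" and yz: "commute y z"
    and z0: "fps_nth z 0 = 0"
  shows "exp_fps (h * ln1_fps z) * y = y * (1 + z) * exp_fps (h * ln1_fps z)"
proof -
  let ?s = "ln1_fps z"
  have ys: "?s * y = y * ?s"
    using yz z0 by (metis commute_def commute_subst_fps_left)
  have "y * (h * ?s + ?s) = (h * ?s) * y"
    by (simp add: mult.assoc ys) (simp add: hy distrib_left distrib_right mult.assoc[symmetric])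
  then have "y * exp_fps (h * ?s + ?s) = exp_fps (h * ?s) * y"
    by (rule subst_fps_intertwine) simp_all
  moreover have "exp_fps (h * ?s + ?s) = exp_fps (h * ?s) * (1 + z)"
    using hz z0 by (simp add: exp_fps_add_commute commute_intros exp_fps_ln1_fps)
  moreover have "exp_fps (h * ?s) * (1 + z) = (1 + z) * exp_fps (h * ?s)"
    using hz z0 unfolding commute_def[symmetric] by (intro commute_intros) simp_all
  ultimately show ?thesis
    by (simp add: mult.assoc)
qed

lemma exp_ln1_conj_ln1:
  assumes r1: "h1 * y1 = y1 * h1 + y1" and c1y2: "commute h1 y2" and cy: "commute y1 y2"
    and z1: "fps_nth y1 0 = 0" and z2: "fps_nth y2 0 = 0"
  shows "exp_fps (h1 * ln1_fps y2) * ln1_fps (y1 + y2) =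
    (ln1_fps y1 + ln1_fps y2) * exp_fps (h1 * ln1_fps y2)"
proof -
  let ?g = "exp_fps (h1 * ln1_fps y2)"
  have a: "?g * y1 = y1 * (1 + y2) * ?g"
    by (rule exp_ln1_conj_eigen[OF r1 c1y2 cy z2])
  have "commute ?g y2"
    using c1y2 z2 by (intro commute_intros) simp_all
  then have "?g * (y1 + y2) = (y1 + y2 + y1 * y2) * ?g"
    by (simp add: commute_def a algebra_simps)
  then have "?g * ln1_fps (y1 + y2) = ln1_fps (y1 + y2 + y1 * y2) * ?g"
    by (rule subst_fps_intertwine) (simp_all add: z1 z2)
  then show ?thesis
    by (simp only: ln1_fps_add_mult[OF cy z1 z2])
qed

text \<open>The twist equation of the Jordanian twist \<open>exp (h \<otimes> ln (1 + \<xi> e))\<close>, with \<open>h0, h1\<close> and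
  \<open>y1, y2\<close> playing the roles of \<open>h\<close> and \<open>\<xi> e\<close> in the first two, respectively last two, legs.\<close>

theorem jordanian_cocycle:
  assumes "commute h0 h1" "commute h0 y1" "commute h0 y2"
    and r1: "h1 * y1 = y1 * h1 + y1" and "commute h1 y2" and cy: "commute y1 y2"
    and z1: "fps_nth y1 0 = 0" and z2: "fps_nth y2 0 = 0"
  shows "exp_fps (h0 * ln1_fps y1) * exp_fps ((h0 + h1) * ln1_fps y2) =
    exp_fps (h1 * ln1_fps y2) * exp_fps (h0 * ln1_fps (y1 + y2))"
proof -
  let ?s1 = "ln1_fps y1" and ?s2 = "ln1_fps y2" and ?g = "exp_fps (h1 * ln1_fps y2)"
  note sym = commute_sym[OF assms(1)] commute_sym[OF assms(2)] commute_sym[OF assms(3)]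
    commute_sym[OF assms(5)] commute_sym[OF cy]
  have e1: "exp_fps ((h0 + h1) * ?s2) = exp_fps (h0 * ?s2) * exp_fps (h1 * ?s2)"
    unfolding distrib_right using assms sym
    by (intro exp_fps_add_commute commute_intros) simp_all
  have e2: "exp_fps (h0 * ?s1) * exp_fps (h0 * ?s2) = exp_fps (h0 * (?s1 + ?s2))"
    unfolding distrib_left using assms sym
    by (intro exp_fps_add_commute[symmetric] commute_intros) simp_all
  have "commute ?g h0"
    using sym z2 by (intro commute_intros) simp_all
  then have "?g * (h0 * ln1_fps (y1 + y2)) = h0 * (?g * ln1_fps (y1 + y2))"
    by (simp only: commute_def mult.assoc[symmetric])
  also have "\<dots> = (h0 * (?s1 + ?s2)) * ?g"
    by (simp only: exp_ln1_conj_ln1[OF r1 assms(5) cy z1 z2] mult.assoc)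
  finally have "?g * (h0 * ln1_fps (y1 + y2)) = (h0 * (?s1 + ?s2)) * ?g" .
  then have e3: "?g * exp_fps (h0 * ln1_fps (y1 + y2)) = exp_fps (h0 * (?s1 + ?s2)) * ?g"
    by (rule subst_fps_intertwine) simp_all
  show ?thesis
    by (simp only: e1 mult.assoc[symmetric] e2 e3)
qed

lemma exp_ln1_intertwine:
  assumes "commute g h" "commute g fps_X" "g * e = e' * g"
  shows "g * exp_fps (h * ln1_fps (fps_X * e)) = exp_fps (h * ln1_fps (fps_X * e')) * g"
proof -
  have "g * (fps_X * e) = (fps_X * e') * g"
    using assms(2,3) unfolding commute_def by (rule intertwine_mult)
  then have "g * ln1_fps (fps_X * e) = ln1_fps (fps_X * e') * g"
    by (rule subst_fps_intertwine) simp_all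
  with assms(1) have "g * (h * ln1_fps (fps_X * e)) = (h * ln1_fps (fps_X * e')) * g"
    unfolding commute_def by (rule intertwine_mult)
  then show ?thesis
    by (rule subst_fps_intertwine) simp_all
qed

end

section \<open>Evaluation homomorphisms of the free algebra\<close>

lemma scal_eq_single: "scal c = Poly_Mapping.single 0 c"
  by (simp add: scal_def zero_word_def)

lemma scal_add: "scal (a + b) = scal a + scal b"
  by (simp add: scal_eq_single single_add)

lemma scal_mult: "scal (a * b) = scal a * scal b"
  by (simp add: scal_eq_single mult_single)

lemma scal_0 [simp]: "scal 0 = 0"
  by (simp add: scal_eq_single)

lemma scal_1 [simp]: "scal 1 = 1"
  by (simp add: scal_eq_single)

lemma FA_eq_sum_single:
  "(p :: FA) = (\<Sum>w\<in>Poly_Mapping.keys p. Poly_Mapping.single w (Poly_Mapping.lookup p w))"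
  by (rule poly_mapping_eqI) (simp add: lookup_sum lookup_single when_def in_keys_iff)

lemma scal_commute: "scal c * p = p * scal c"
proof -
  have single: "scal c * Poly_Mapping.single w a = Poly_Mapping.single w a * scal c" for w a
    by (simp add: scal_eq_single mult_single mult.commute)
  show ?thesis
    by (subst (1 3) FA_eq_sum_single) (simp add: sum_distrib_left sum_distrib_right single)
qed

lemma fa_hom_eq_sum:
  assumes "finite S" "Poly_Mapping.keys p \<subseteq> S"
  shows "fa_hom \<phi> p = (\<Sum>w\<in>S. scal (Poly_Mapping.lookup p w) * prod_list (map \<phi> (unword w)))"
  unfolding fa_hom_def
  by (rule sum.mono_neutral_left) (use assms in \<open>auto simp: in_keys_iff\<close>)

lemma fa_hom_single:
  "fa_hom \<phi> (Poly_Mapping.single w a) = scal a * prod_list (map \<phi> (unword w))"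
  using fa_hom_eq_sum[of "{w}" "Poly_Mapping.single w a" \<phi>] by simp

lemma fa_hom_add: "fa_hom \<phi> (p + q) = fa_hom \<phi> p + fa_hom \<phi> q"
proof -
  let ?S = "Poly_Mapping.keys p \<union> Poly_Mapping.keys q"
  have "finite ?S" "Poly_Mapping.keys (p + q) \<subseteq> ?S"
    by (simp_all add: keys_add)
  then show ?thesis
    by (simp add: fa_hom_eq_sum[of ?S] lookup_add scal_add distrib_right sum.distrib)
qed

lemma fa_hom_diff: "fa_hom \<phi> (p - q) = fa_hom \<phi> p - fa_hom \<phi> q"
  using fa_hom_add[of \<phi> "p - q" q] by (simp add: eq_diff_eq)

lemma fa_hom_0 [simp]: "fa_hom \<phi> 0 = 0"
  by (simp add: fa_hom_def)

lemma fa_hom_sum: "fa_hom \<phi> (\<Sum>i\<in>I. f i) = (\<Sum>i\<in>I. fa_hom \<phi> (f i))"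
  by (induct I rule: infinite_finite_induct) (auto simp: fa_hom_add)

lemma fa_hom_mult: "fa_hom \<phi> (p * q) = fa_hom \<phi> p * fa_hom \<phi> q"
proof -
  let ?M = "\<lambda>w. prod_list (map \<phi> (unword w))"
  have M_plus: "?M (v + w) = ?M v * ?M w" for v w
    by (cases v; cases w) (simp add: plus_word_def)
  have scal_shuffle: "scal (a * b) * (X * Y) = scal a * X * (scal b * Y)" for a b X Y
  proof -
    have "scal b * (X * Y) = X * (scal b * Y)"
      by (simp only: mult.assoc[symmetric] scal_commute[of b X])
    then show ?thesis by (simp only: scal_mult mult.assoc)
  qed
  have "p * q = (\<Sum>v\<in>Poly_Mapping.keys p. \<Sum>w\<in>Poly_Mapping.keys q.
      Poly_Mapping.single (v + w) (Poly_Mapping.lookup p v * Poly_Mapping.lookup q w))"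
    by (subst FA_eq_sum_single, subst (2) FA_eq_sum_single) (simp only: sum_product mult_single)
  then have "fa_hom \<phi> (p * q) = (\<Sum>v\<in>Poly_Mapping.keys p. \<Sum>w\<in>Poly_Mapping.keys q.
      scal (Poly_Mapping.lookup p v) * ?M v * (scal (Poly_Mapping.lookup q w) * ?M w))"
    by (simp only: fa_hom_sum fa_hom_single M_plus scal_shuffle)
  also have "\<dots> = fa_hom \<phi> p * fa_hom \<phi> q"
    by (simp only: fa_hom_def sum_product)
  finally show ?thesis .
qed

lemma fa_hom_scal [simp]: "fa_hom \<phi> (scal c) = scal c"
  by (simp add: scal_eq_single fa_hom_single zero_word_def)

lemma fa_hom_1 [simp]: "fa_hom \<phi> 1 = 1"
  using fa_hom_scal[of \<phi> 1] by simp

lemma fa_hom_L [simp]: "fa_hom \<phi> (L k x) = \<phi> (k, x)"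
  by (simp add: L_def fa_hom_single)

lemma uf_hom_nth [simp]: "fps_nth (uf_hom \<phi> F) n = fa_hom \<phi> (fps_nth F n)"
  by (simp add: uf_hom_def)

lemma uf_hom_mult: "uf_hom \<phi> (F * G) = uf_hom \<phi> F * uf_hom \<phi> G"
  by (rule fps_ext) (simp add: fps_mult_nth fa_hom_sum fa_hom_mult)

lemma uf_hom_power: "uf_hom \<phi> (F ^ m) = uf_hom \<phi> F ^ m"
proof (induct m)
  case 0
  show ?case by (rule fps_ext) (simp add: fps_one_nth)
qed (simp add: uf_hom_mult)

lemma uf_hom_const: "uf_hom \<phi> (fps_const a) = fps_const (fa_hom \<phi> a)"
  by (rule fps_ext) simp

lemma uf_hom_X: "uf_hom \<phi> fps_X = fps_X"
  by (rule fps_ext) (simp add: fps_X_nth)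

lemma uf_hom_fexp: "uf_hom \<phi> (fexp X) = fexp (uf_hom \<phi> X)"
  by (rule fps_ext) (simp add: fexp_def fa_hom_sum fa_hom_mult flip: uf_hom_power)

lemma uf_hom_fln1: "uf_hom \<phi> (fln1 X) = fln1 (uf_hom \<phi> X)"
  by (rule fps_ext) (simp add: fln1_def fa_hom_sum fa_hom_mult flip: uf_hom_power)

lemma fln1_nth_0 [simp]: "fps_nth (fln1 X) 0 = 0"
  by (simp add: fln1_def)

section \<open>The algebra \<open>U(sl(3))\<^sup>\<otimes>\<^sup>\<infinity>\<close> as a quotient type\<close>

lemma Irel_mult_left: "a \<in> Irel \<Longrightarrow> p * a \<in> Irel"
  using Irel.mult[of a p 1] by simp

lemma Irel_mult_right: "a \<in> Irel \<Longrightarrow> a * q \<in> Irel"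
  using Irel.mult[of a 1 q] by simp

lemma Irel_uminus: "a \<in> Irel \<Longrightarrow> - a \<in> Irel"
  using Irel_mult_left[of a "-1"] by simp

lemma Irel_diff: "a \<in> Irel \<Longrightarrow> b \<in> Irel \<Longrightarrow> a - b \<in> Irel"
  using Irel.add[of a "- b"] Irel_uminus[of b] by simp

lemma one_notin_Irel: "(1 :: FA) \<notin> Irel"
proof
  have "a \<in> Irel \<Longrightarrow> fa_hom (\<lambda>_. 0) a = 0" for a
    by (induct rule: Irel.induct) (simp_all add: fa_hom_mult fa_hom_add fa_hom_diff)
  moreover assume "(1 :: FA) \<in> Irel"
  ultimately show False by fastforce
qed

definition Irel_equiv :: "FA \<Rightarrow> FA \<Rightarrow> bool" where
  "Irel_equiv a b \<longleftrightarrow> a - b \<in> Irel"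

quotient_type usl3 = FA / Irel_equiv
proof (rule equivpI)
  show "reflp Irel_equiv" by (simp add: reflp_def Irel_equiv_def Irel.zero)
  show "symp Irel_equiv"
    using Irel_uminus by (fastforce simp: symp_def Irel_equiv_def)
  show "transp Irel_equiv"
    using Irel.add by (fastforce simp: transp_def Irel_equiv_def)
qed

instantiation usl3 :: ring_1
begin

lift_definition zero_usl3 :: usl3 is "0 :: FA" .
lift_definition one_usl3 :: usl3 is "1 :: FA" .
lift_definition plus_usl3 :: "usl3 \<Rightarrow> usl3 \<Rightarrow> usl3" is "(+)"
  unfolding Irel_equiv_def using Irel.add by (fastforce simp: algebra_simps)
lift_definition uminus_usl3 :: "usl3 \<Rightarrow> usl3" is uminus
  unfolding Irel_equiv_def using Irel_uminus by (fastforce simp: algebra_simps)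
lift_definition minus_usl3 :: "usl3 \<Rightarrow> usl3 \<Rightarrow> usl3" is "(-)"
  unfolding Irel_equiv_def using Irel_diff by (fastforce simp: algebra_simps)
lift_definition times_usl3 :: "usl3 \<Rightarrow> usl3 \<Rightarrow> usl3" is "(*)"
proof (unfold Irel_equiv_def)
  fix a b c d :: FA
  assume "a - b \<in> Irel" "c - d \<in> Irel"
  then have "(a - b) * c + b * (c - d) \<in> Irel"
    by (intro Irel.add Irel_mult_left Irel_mult_right)
  then show "a * c - b * d \<in> Irel" by (simp add: algebra_simps)
qed

instance
  by standard (transfer;
    use one_notin_Irel Irel_uminus in \<open>fastforce simp: Irel_equiv_def algebra_simps Irel.zero\<close>)+

end

lemma abs_usl3_add: "abs_usl3 (a + b) = abs_usl3 a + abs_usl3 b"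
  by (simp add: plus_usl3.abs_eq)

lemma abs_usl3_mult: "abs_usl3 (a * b) = abs_usl3 a * abs_usl3 b"
  by (simp add: times_usl3.abs_eq)

lemma abs_usl3_diff: "abs_usl3 (a - b) = abs_usl3 a - abs_usl3 b"
  by (simp add: minus_usl3.abs_eq)

lemma abs_usl3_0 [simp]: "abs_usl3 0 = 0"
  by (simp add: zero_usl3.abs_eq)

lemma abs_usl3_1 [simp]: "abs_usl3 1 = 1"
  by (simp add: one_usl3.abs_eq)

lemma abs_usl3_eq_iff: "abs_usl3 a = abs_usl3 b \<longleftrightarrow> a - b \<in> Irel"
  by (metis usl3.abs_eq_iff Irel_equiv_def)

lemma abs_usl3_sum: "abs_usl3 (\<Sum>i\<in>I. f i) = (\<Sum>i\<in>I. abs_usl3 (f i))"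
  by (induct I rule: infinite_finite_induct) (simp_all add: abs_usl3_add)

definition uscal :: "complex \<Rightarrow> usl3" where
  "uscal c = abs_usl3 (scal c)"

interpretation usl3: central_scalars uscal
proof
  fix a b :: complex and x :: usl3
  show "uscal (a + b) = uscal a + uscal b"
    by (simp add: uscal_def scal_add abs_usl3_add)
  show "uscal (a * b) = uscal a * uscal b"
    by (simp add: uscal_def scal_mult abs_usl3_mult)
  show "uscal 1 = 1"
    by (simp add: uscal_def)
  show "uscal a * x = x * uscal a"
    by (induct x rule: usl3.abs_induct) (simp add: uscal_def scal_commute flip: abs_usl3_mult)
qed

abbreviation "cs c \<equiv> fps_const (uscal c)"

definition proj :: "UF \<Rightarrow> usl3 fps" where
  "proj F = Abs_fps (\<lambda>n. abs_usl3 (fps_nth F n))"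

lemma proj_nth [simp]: "fps_nth (proj F) n = abs_usl3 (fps_nth F n)"
  by (simp add: proj_def)

lemma eqv_iff_proj_eq: "eqv F G \<longleftrightarrow> proj F = proj G"
  by (simp add: eqv_def fps_eq_iff abs_usl3_eq_iff)

lemma proj_mult: "proj (F * G) = proj F * proj G"
  by (rule fps_ext) (simp add: fps_mult_nth abs_usl3_sum abs_usl3_mult)

lemma proj_1: "proj 1 = 1"
  by (rule fps_ext) simp

lemma proj_power: "proj (F ^ m) = proj F ^ m"
  by (induct m) (simp_all add: proj_1 proj_mult)

lemma proj_const: "proj (fps_const a) = fps_const (abs_usl3 a)"
  by (rule fps_ext) simp

lemma proj_X: "proj fps_X = fps_X"
  by (rule fps_ext) (simp add: fps_X_nth)

lemma proj_fexp: "proj (fexp X) = usl3.exp_fps (proj X)"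
  by (rule fps_ext)
    (simp add: fexp_def usl3.subst_fps_nth abs_usl3_sum abs_usl3_mult uscal_def flip: proj_power)

lemma proj_fln1: "proj (fln1 X) = usl3.ln1_fps (proj X)"
proof (rule fps_ext)
  fix n
  have "fps_nth (usl3.ln1_fps (proj X)) n =
      (\<Sum>m\<in>insert 0 {1..n}. uscal (fps_nth (fps_ln 1) m) * fps_nth (proj X ^ m) n)"
    unfolding usl3.subst_fps_nth by (rule sum.cong) auto
  also have "\<dots> = fps_nth (proj (fln1 X)) n"
  proof -
    have sign: "(- 1 :: complex) ^ (m - Suc 0) = - ((- 1) ^ m)" if "1 \<le> m" for m
      using that by (cases m) auto
    then show ?thesis
      by (simp add: fln1_def fps_ln_nth abs_usl3_sum abs_usl3_mult uscal_def flip: proj_power)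
  qed
  finally show "fps_nth (proj (fln1 X)) n = fps_nth (usl3.ln1_fps (proj X)) n" ..
qed

definition gen :: "nat \<Rightarrow> sl3 \<Rightarrow> usl3 fps" where
  "gen k x = fps_const (abs_usl3 (L k x))"

lemma commute_gen_legs: "k \<noteq> l \<Longrightarrow> commute (gen k x) (gen l y)"
  by (simp add: commute_def gen_def abs_usl3_eq_iff Irel.comm flip: abs_usl3_mult)

lemma Rep_sl3_sl_scale: "Rep_sl3 (sl_scale c x) = msc c (Rep_sl3 x)"
proof -
  have "trace (msc c (Rep_sl3 x)) = c * trace (Rep_sl3 x)"
    by (simp add: trace_def msc_def sum_distrib_left)
  then show ?thesis
    unfolding sl_scale_def using Rep_sl3[of x] by (simp add: Abs_sl3_inverse)
qed

lemma gen_commutator: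
  assumes "Rep_sl3 x ** Rep_sl3 y - Rep_sl3 y ** Rep_sl3 x = msc c (Rep_sl3 z)"
  shows "gen k x * gen k y = gen k y * gen k x + cs c * gen k z"
proof -
  have br: "sl_bracket x y = sl_scale c z"
    by (metis assms Rep_sl3_inverse Rep_sl3_sl_scale sl_bracket_def)
  have "(L k x * L k y - L k y * L k x - L k (sl_bracket x y)) +
      (L k (sl_scale c z) - scal c * L k z) \<in> Irel"
    by (rule Irel.add[OF Irel.lie Irel.lin_scale])
  then have "abs_usl3 (L k x * L k y - L k y * L k x) = abs_usl3 (scal c * L k z)"
    by (simp add: abs_usl3_eq_iff br)
  then show ?thesis
    by (simp add: gen_def uscal_def abs_usl3_mult abs_usl3_diff diff_eq_eq add.commute)
qed

lemma Rep_sl3_generators: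
  "Rep_sl3 Aelt = mu 1 2" "Rep_sl3 Belt = mu 2 3" "Rep_sl3 Eelt = mu 1 3"
  "Rep_sl3 HP = msc (1/3) (msc 2 (mu 1 1) - mu 2 2 - mu 3 3)"
  "Rep_sl3 Hperp = msc (1/3) (mu 1 1 - msc 2 (mu 2 2) + mu 3 3)"
  unfolding Aelt_def Belt_def Eelt_def HP_def Hperp_def
  by (simp_all add: Abs_sl3_inverse trace_def msc_def sum_3 mu_def)

lemma sl3_commutators:
  "Rep_sl3 Aelt ** Rep_sl3 Eelt - Rep_sl3 Eelt ** Rep_sl3 Aelt = msc 0 (Rep_sl3 Eelt)"
  "Rep_sl3 Belt ** Rep_sl3 Eelt - Rep_sl3 Eelt ** Rep_sl3 Belt = msc 0 (Rep_sl3 Eelt)"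
  "Rep_sl3 Belt ** Rep_sl3 Aelt - Rep_sl3 Aelt ** Rep_sl3 Belt = msc (- 1) (Rep_sl3 Eelt)"
  "Rep_sl3 HP ** Rep_sl3 Eelt - Rep_sl3 Eelt ** Rep_sl3 HP = msc 1 (Rep_sl3 Eelt)"
  "Rep_sl3 HP ** Rep_sl3 Aelt - Rep_sl3 Aelt ** Rep_sl3 HP = msc 1 (Rep_sl3 Aelt)"
  "Rep_sl3 HP ** Rep_sl3 Belt - Rep_sl3 Belt ** Rep_sl3 HP = msc 0 (Rep_sl3 Belt)"
  "Rep_sl3 Hperp ** Rep_sl3 Eelt - Rep_sl3 Eelt ** Rep_sl3 Hperp = msc 0 (Rep_sl3 Eelt)"
  "Rep_sl3 Hperp ** Rep_sl3 Aelt - Rep_sl3 Aelt ** Rep_sl3 Hperp = msc 1 (Rep_sl3 Aelt)"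
  "Rep_sl3 Hperp ** Rep_sl3 Belt - Rep_sl3 Belt ** Rep_sl3 Hperp = msc (- 1) (Rep_sl3 Belt)"
  "Rep_sl3 Hperp ** Rep_sl3 HP - Rep_sl3 HP ** Rep_sl3 Hperp = msc 0 (Rep_sl3 HP)"
  by (simp_all add: Rep_sl3_generators vec_eq_iff forall_3 matrix_matrix_mult_def sum_3 mu_def
      msc_def)

lemma gen_reorder:
  "gen k Aelt * gen k Eelt = gen k Eelt * gen k Aelt"
  "gen k Belt * gen k Eelt = gen k Eelt * gen k Belt"
  "gen k Belt * gen k Aelt = gen k Aelt * gen k Belt - gen k Eelt"
  "gen k HP * gen k Eelt = gen k Eelt * gen k HP + gen k Eelt"
  "gen k HP * gen k Aelt = gen k Aelt * gen k HP + gen k Aelt"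
  "gen k HP * gen k Belt = gen k Belt * gen k HP"
  "gen k Hperp * gen k Eelt = gen k Eelt * gen k Hperp"
  "gen k Hperp * gen k Aelt = gen k Aelt * gen k Hperp + gen k Aelt"
  "gen k Hperp * gen k Belt = gen k Belt * gen k Hperp - gen k Belt"
  "gen k Hperp * gen k HP = gen k HP * gen k Hperp"
  using sl3_commutators[THEN gen_commutator, of k]
  by (simp_all add: usl3.sc_uminus flip: fps_const_neg)

lemma mult_assoc_rewrite: "x * y = r \<Longrightarrow> x * (y * z) = r * (z :: 'a::semigroup_mult)"
  by (simp add: mult.assoc[symmetric])

lemma gen_legs_reorder: "k < l \<Longrightarrow> gen l x * gen k y = gen k y * gen l x"
  using commute_gen_legs[of l k x y] by (simp add: commute_def)

lemma fps_X_reorder: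
  "gen k x * fps_X = fps_X * gen k x"
  "cs c * fps_X = fps_X * cs c"
  by (simp_all add: fps_mult_fps_X_commute)

lemma uscal_reorder: "gen k x * cs c = cs c * gen k x"
  by (simp add: usl3.fps_const_sc_commute)

text \<open>Oriented rewrite rules normalising monomials in the generators: legs in increasing order,
  inside a leg the order E < A < B < HP < Hperp, the formal parameter and the scalars in front.\<close>
lemmas gen_normalize =
  gen_reorder gen_reorder[THEN mult_assoc_rewrite]
  gen_legs_reorder gen_legs_reorder[THEN mult_assoc_rewrite]
  fps_X_reorder fps_X_reorder[THEN mult_assoc_rewrite]
  uscal_reorder uscal_reorder[THEN mult_assoc_rewrite]

section \<open>The twist equations in \<open>U(sl(3))\<^sup>\<otimes>\<^sup>3[[\<xi>]]\<close>\<close>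

abbreviation "gA k \<equiv> gen k Aelt"
abbreviation "gB k \<equiv> gen k Belt"
abbreviation "gE k \<equiv> gen k Eelt"
abbreviation "gH k \<equiv> gen k HP"
abbreviation "gK k \<equiv> gen k Hperp"

abbreviation jordan_factor :: "usl3 fps \<Rightarrow> usl3 fps \<Rightarrow> usl3 fps" where
  "jordan_factor h e \<equiv> usl3.exp_fps (h * usl3.ln1_fps (fps_X * e))"

abbreviation ext_factor :: "usl3 fps \<Rightarrow> usl3 fps \<Rightarrow> usl3 fps" where
  "ext_factor a b \<equiv> usl3.exp_fps (fps_X * (a * b))"

lemma commute_gen_same_leg:
  "commute (gA k) (gE k)" "commute (gE k) (gA k)" "commute (gB k) (gE k)" "commute (gE k) (gB k)"
  "commute (gH k) (gB k)" "commute (gB k) (gH k)" "commute (gK k) (gE k)" "commute (gE k) (gK k)"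
  "commute (gK k) (gH k)" "commute (gH k) (gK k)"
  by (simp_all add: commute_def gen_reorder)

lemmas commute_gen_intros = usl3.commute_intros commute_gen_legs commute_gen_same_leg

lemma jordan_factor_cocycle:
  "jordan_factor (gH 0) (gE 1) * jordan_factor (gH 0 + gH 1) (gE 2) =
    jordan_factor (gH 1) (gE 2) * jordan_factor (gH 0) (gE 1 + gE 2)"
  unfolding distrib_left[of fps_X]
  by (rule usl3.jordanian_cocycle) (unfold commute_def, simp_all add: algebra_simps gen_normalize)

lemma jordan_factor_conj_ext_factor:
  "jordan_factor (gH 0) (gE 1) * ext_factor (gA 0 + gA 1) (gB 2) =
    ext_factor (gA 0 * (1 + fps_X * gE 1) + gA 1) (gB 2) * jordan_factor (gH 0) (gE 1)"
proof -
  let ?J = "jordan_factor (gH 0) (gE 1)"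
  have A0: "?J * gA 0 = gA 0 * (1 + fps_X * gE 1) * ?J"
    by (rule usl3.exp_ln1_conj_eigen) (unfold commute_def, simp_all add: algebra_simps gen_normalize)
  have "commute ?J (gA 1)" "commute ?J (gB 2)" "commute ?J fps_X"
    by (intro commute_gen_intros, simp_all)+
  note moves = this[unfolded commute_def]
  have "?J * (fps_X * ((gA 0 + gA 1) * gB 2)) =
      fps_X * ((gA 0 * (1 + fps_X * gE 1) + gA 1) * gB 2) * ?J"
    by (simp only: distrib_left distrib_right mult.assoc A0[THEN mult_assoc_rewrite]
        moves moves[THEN mult_assoc_rewrite])
  then show ?thesis
    by (rule usl3.subst_fps_intertwine) simp_all
qed

lemma ext_factor_twisted_cocycle:
  "ext_factor (gA 0) (gB 1) * ext_factor (gA 0 * (1 + fps_X * gE 1) + gA 1) (gB 2) =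
    ext_factor (gA 1) (gB 2) * ext_factor (gA 0) (gB 1 + gB 2)"
proof -
  let ?X = "fps_X * (gA 0 * gB 1)" and ?Y = "fps_X * ((gA 0 * (1 + fps_X * gE 1) + gA 1) * gB 2)"
    and ?C = "- (fps_X * (fps_X * (gA 0 * (gE 1 * gB 2))))"
  have "?X * ?Y = ?Y * ?X + ?C" "?X * ?C = ?C * ?X"
    by (simp_all add: algebra_simps gen_normalize)
  then have "usl3.exp_fps ?X * ?Y = (?Y + ?C) * usl3.exp_fps ?X"
    by (rule usl3.exp_fps_commutator_central) simp
  then have "usl3.exp_fps ?X * usl3.exp_fps ?Y = usl3.exp_fps (?Y + ?C) * usl3.exp_fps ?X"
    by (rule usl3.subst_fps_intertwine) simp_all
  moreover have "?Y + ?C = fps_X * (gA 0 * gB 2) + fps_X * (gA 1 * gB 2)"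
    by (simp add: algebra_simps gen_normalize)
  moreover have "usl3.exp_fps (fps_X * (gA 0 * gB 2) + fps_X * (gA 1 * gB 2)) * ext_factor (gA 0) (gB 1) =
      ext_factor (gA 1) (gB 2) * usl3.exp_fps (fps_X * (gA 0 * gB 1) + fps_X * (gA 0 * gB 2))"
  proof -
    have "usl3.exp_fps (fps_X * (gA 0 * gB 2) + fps_X * (gA 1 * gB 2)) =
        ext_factor (gA 0) (gB 2) * ext_factor (gA 1) (gB 2)"
      "usl3.exp_fps (fps_X * (gA 0 * gB 1) + fps_X * (gA 0 * gB 2)) =
        ext_factor (gA 0) (gB 1) * ext_factor (gA 0) (gB 2)"
      by (intro usl3.exp_fps_add_commute commute_gen_intros, simp_all)+
    moreover have "commute (ext_factor (gA 0) (gB 2)) (ext_factor (gA 1) (gB 2))"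
      "commute (ext_factor (gA 0) (gB 2)) (ext_factor (gA 0) (gB 1))"
      by (intro commute_gen_intros, simp_all)+
    ultimately show ?thesis
      unfolding commute_def by (simp only: mult.assoc)
  qed
  ultimately show ?thesis
    by (simp add: distrib_left)
qed

lemma ext_jordan_cocycle:
  "(ext_factor (gA 0) (gB 1) * jordan_factor (gH 0) (gE 1)) *
      (ext_factor (gA 0 + gA 1) (gB 2) * jordan_factor (gH 0 + gH 1) (gE 2)) =
    (ext_factor (gA 1) (gB 2) * jordan_factor (gH 1) (gE 2)) *
      (ext_factor (gA 0) (gB 1 + gB 2) * jordan_factor (gH 0) (gE 1 + gE 2))"
proof (rule twist_product[OF jordan_factor_cocycle jordan_factor_conj_ext_factor
      ext_factor_twisted_cocycle])
  have "commute (ext_factor (gA 0) (gB 1 + gB 2)) (jordan_factor (gH 1) (gE 2))"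
    by (intro commute_gen_intros) simp_all
  then show "ext_factor (gA 0) (gB 1 + gB 2) * jordan_factor (gH 1) (gE 2) =
      jordan_factor (gH 1) (gE 2) * ext_factor (gA 0) (gB 1 + gB 2)"
    by (simp only: commute_def)
qed

lemma JE_perp_factor_cocycle:
  "jordan_factor (gK 0) (cs c * gA 1) * jordan_factor (gK 0 + gK 1) (cs c * gA 2) =
    jordan_factor (gK 1) (cs c * gA 2) * jordan_factor (gK 0) (cs c * (gA 1 + gA 2))"
  unfolding distrib_left[of "cs c"] distrib_left[of fps_X]
  by (rule usl3.jordanian_cocycle) (unfold commute_def, simp_all add: algebra_simps gen_normalize)

lemma JE_perp_factor_commute:
  "commute (ext_factor (gA 0) (gB 1) * jordan_factor (gH 0) (gE 1))
    (jordan_factor (gK 0 + gK 1) (cs c * gA 2))"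
proof (rule commute_mult_left)
  let ?X = "fps_X * (gA 0 * gB 1)" and ?P = "(gK 0 + gK 1) * usl3.ln1_fps (fps_X * (cs c * gA 2))"
  have "commute ?X (gK 0 + gK 1)"
    by (simp add: commute_def algebra_simps gen_normalize)
  moreover have "commute ?X (usl3.ln1_fps (fps_X * (cs c * gA 2)))"
    by (intro commute_gen_intros) simp_all
  ultimately have "commute ?X ?P"
    by (rule commute_mult_right)
  then have "commute ?X (usl3.exp_fps ?P)"
    by (rule usl3.commute_subst_fps_right) simp
  then show "commute (usl3.exp_fps ?X) (usl3.exp_fps ?P)"
    by (rule usl3.commute_subst_fps_left) simp
  show "commute (jordan_factor (gH 0) (gE 1)) (usl3.exp_fps ?P)"
    by (intro commute_gen_intros) simp_all
qed

lemma JE_perp_factor_intertwine: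
  "jordan_factor (gK 0) (cs c * (gA 1 + gA 2)) * (ext_factor (gA 1) (gB 2) * jordan_factor (gH 1) (gE 2)) =
    (ext_factor (gA 1) (gB 2) * jordan_factor (gH 1) (gE 2)) * jordan_factor (gK 0) (cs c * (gA 1 + gA 2))"
proof -
  let ?T = "ext_factor (gA 1) (gB 2)" and ?J = "jordan_factor (gH 1) (gE 2)"
  let ?e' = "cs c * (gA 1 + fps_X * (gA 1 * gE 2) + gA 2)"
  have J: "?J * jordan_factor (gK 0) (cs c * (gA 1 + gA 2)) = jordan_factor (gK 0) ?e' * ?J"
  proof (rule usl3.exp_ln1_intertwine)
    have "?J * gA 1 = gA 1 * (1 + fps_X * gE 2) * ?J"
      by (rule usl3.exp_ln1_conj_eigen) (unfold commute_def, simp_all add: algebra_simps gen_normalize)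
    moreover have "commute ?J (gA 2)" "commute ?J (cs c)"
      by (intro commute_gen_intros, simp_all)+
    ultimately have moves: "?J * gA 1 = (gA 1 + fps_X * (gA 1 * gE 2)) * ?J"
      "?J * gA 2 = gA 2 * ?J" "?J * cs c = cs c * ?J"
      unfolding commute_def by (simp_all add: algebra_simps gen_normalize)
    show "?J * (cs c * (gA 1 + gA 2)) = ?e' * ?J"
      by (simp only: distrib_left distrib_right mult.assoc moves moves[THEN mult_assoc_rewrite])
  qed (intro commute_gen_intros, simp_all)+
  have T: "?T * jordan_factor (gK 0) ?e' = jordan_factor (gK 0) (cs c * (gA 1 + gA 2)) * ?T"
  proof (rule usl3.exp_ln1_intertwine)
    have "?T * gA 2 = (gA 2 + - (fps_X * (gA 1 * gE 2))) * ?T"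
      by (rule usl3.exp_fps_commutator_central) (simp_all add: algebra_simps gen_normalize)
    moreover have "commute ?T (gA 1)" "commute ?T (gE 2)" "commute ?T fps_X" "commute ?T (cs c)"
      by (intro commute_gen_intros, simp_all)+
    ultimately have moves: "?T * gA 2 = (gA 2 + - (fps_X * (gA 1 * gE 2))) * ?T"
      "?T * gA 1 = gA 1 * ?T" "?T * gE 2 = gE 2 * ?T" "?T * fps_X = fps_X * ?T" "?T * cs c = cs c * ?T"
      unfolding commute_def by simp_all
    show "?T * ?e' = cs c * (gA 1 + gA 2) * ?T"
      by (simp only: distrib_left distrib_right mult.assoc mult_1_right
          moves moves[THEN mult_assoc_rewrite])
        (simp add: algebra_simps)
  qed (intro commute_gen_intros, simp_all)+
  have "(?T * ?J) * jordan_factor (gK 0) (cs c * (gA 1 + gA 2)) = ?T * (jordan_factor (gK 0) ?e' * ?J)"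
    by (simp only: mult.assoc[of ?T ?J] J)
  also have "\<dots> = jordan_factor (gK 0) (cs c * (gA 1 + gA 2)) * (?T * ?J)"
    by (rule T[THEN mult_assoc_rewrite, THEN trans]) (rule mult.assoc)
  finally show ?thesis ..
qed

lemma RE_perp_factor_cocycle:
  "jordan_factor (cs z * gK 0) (gE 1) * jordan_factor (cs z * (gK 0 + gK 1)) (gE 2) =
    jordan_factor (cs z * gK 1) (gE 2) *
      usl3.exp_fps (cs z * gK 0 * (usl3.ln1_fps (fps_X * gE 1) + usl3.ln1_fps (fps_X * gE 2)))"
proof -
  let ?s1 = "usl3.ln1_fps (fps_X * gE 1)" and ?s2 = "usl3.ln1_fps (fps_X * gE 2)"
  have "jordan_factor (cs z * gK 0) (gE 1) * jordan_factor (cs z * (gK 0 + gK 1)) (gE 2) =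
      usl3.exp_fps (cs z * gK 0 * ?s1 + cs z * (gK 0 + gK 1) * ?s2)"
    by (intro usl3.exp_fps_add_commute[symmetric] commute_gen_intros) simp_all
  also have "cs z * gK 0 * ?s1 + cs z * (gK 0 + gK 1) * ?s2 =
      cs z * gK 1 * ?s2 + cs z * gK 0 * (?s1 + ?s2)"
    by (simp only: distrib_left distrib_right add_ac)
  also have "usl3.exp_fps \<dots> =
      jordan_factor (cs z * gK 1) (gE 2) * usl3.exp_fps (cs z * gK 0 * (?s1 + ?s2))"
    by (intro usl3.exp_fps_add_commute commute_gen_intros) simp_all
  finally show ?thesis .
qed

lemma RE_perp_factor_commute:
  "commute (ext_factor (gA 0) (gB 1) * jordan_factor (gH 0) (gE 1))
    (jordan_factor (cs z * (gK 0 + gK 1)) (gE 2))"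
proof (rule commute_mult_left)
  let ?X = "fps_X * (gA 0 * gB 1)" and ?P = "cs z * (gK 0 + gK 1) * usl3.ln1_fps (fps_X * gE 2)"
  have "commute ?X (gK 0 + gK 1)"
    by (simp add: commute_def algebra_simps gen_normalize)
  then have "commute ?X (cs z * (gK 0 + gK 1))"
    by (rule commute_mult_right[OF usl3.commute_fps_const_sc_right])
  moreover have "commute ?X (usl3.ln1_fps (fps_X * gE 2))"
    by (intro commute_gen_intros) simp_all
  ultimately have "commute ?X ?P"
    by (rule commute_mult_right)
  then have "commute ?X (usl3.exp_fps ?P)"
    by (rule usl3.commute_subst_fps_right) simp
  then show "commute (usl3.exp_fps ?X) (usl3.exp_fps ?P)"
    by (rule usl3.commute_subst_fps_left) simp
  show "commute (jordan_factor (gH 0) (gE 1)) (usl3.exp_fps ?P)"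
    by (intro commute_gen_intros) simp_all
qed

lemma RE_perp_factor_intertwine:
  "usl3.exp_fps (cs z * gK 0 * (usl3.ln1_fps (fps_X * gE 1) + usl3.ln1_fps (fps_X * gE 2))) *
      (ext_factor (gA 1) (gB 2) * jordan_factor (gH 1) (gE 2)) =
    (ext_factor (gA 1) (gB 2) * jordan_factor (gH 1) (gE 2)) * jordan_factor (cs z * gK 0) (gE 1 + gE 2)"
proof -
  let ?T = "ext_factor (gA 1) (gB 2)" and ?J = "jordan_factor (gH 1) (gE 2)"
  let ?R = "usl3.exp_fps (cs z * gK 0 * (usl3.ln1_fps (fps_X * gE 1) + usl3.ln1_fps (fps_X * gE 2)))"
  have "commute ?J (cs z * gK 0)"
    by (intro commute_gen_intros) simp_all
  moreover have "?J * usl3.ln1_fps (fps_X * (gE 1 + gE 2)) =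
      (usl3.ln1_fps (fps_X * gE 1) + usl3.ln1_fps (fps_X * gE 2)) * ?J"
    unfolding distrib_left[of fps_X]
    by (rule usl3.exp_ln1_conj_ln1) (unfold commute_def, simp_all add: algebra_simps gen_normalize)
  ultimately have "?J * (cs z * gK 0 * usl3.ln1_fps (fps_X * (gE 1 + gE 2))) =
      cs z * gK 0 * (usl3.ln1_fps (fps_X * gE 1) + usl3.ln1_fps (fps_X * gE 2)) * ?J"
    unfolding commute_def by (rule intertwine_mult)
  then have J: "?J * jordan_factor (cs z * gK 0) (gE 1 + gE 2) = ?R * ?J"
    by (rule usl3.subst_fps_intertwine) simp_all
  have "commute ?T ?R"
    by (intro commute_gen_intros) simp_all
  then have T: "?T * ?R = ?R * ?T"
    by (simp only: commute_def)
  have "(?T * ?J) * jordan_factor (cs z * gK 0) (gE 1 + gE 2) = ?T * (?R * ?J)"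
    by (simp only: mult.assoc[of ?T ?J] J)
  also have "\<dots> = ?R * (?T * ?J)"
    by (rule T[THEN mult_assoc_rewrite, THEN trans]) (rule mult.assoc)
  finally show ?thesis ..
qed

definition gen_image :: "(letter \<Rightarrow> FA) \<Rightarrow> nat \<Rightarrow> sl3 \<Rightarrow> usl3 fps" where
  "gen_image \<phi> i x = fps_const (abs_usl3 (\<phi> (i, x)))"

lemmas proj_uf_hom_simps = uf_hom_mult uf_hom_fexp uf_hom_fln1 uf_hom_const uf_hom_X
  fa_hom_mult proj_mult proj_fexp proj_fln1 proj_const proj_X

lemma proj_uf_hom_F_JE:
  "proj (uf_hom \<phi> (F_JE c)) =
    jordan_factor (gen_image \<phi> 0 Hperp) (cs c * gen_image \<phi> 1 Aelt) *
    ext_factor (gen_image \<phi> 0 Aelt) (gen_image \<phi> 1 Belt) *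
    jordan_factor (gen_image \<phi> 0 HP) (gen_image \<phi> 1 Eelt)"
  unfolding F_JE_def tens2_def leg_def U_def Uc_def sigma_def sigmaA_def
  by (simp add: proj_uf_hom_simps gen_image_def uscal_def abs_usl3_mult mult.assoc)

lemma proj_uf_hom_F_RE:
  "proj (uf_hom \<phi> (F_RE z)) =
    jordan_factor (cs z * gen_image \<phi> 0 Hperp) (gen_image \<phi> 1 Eelt) *
    ext_factor (gen_image \<phi> 0 Aelt) (gen_image \<phi> 1 Belt) *
    jordan_factor (gen_image \<phi> 0 HP) (gen_image \<phi> 1 Eelt)"
  unfolding F_RE_def tens2_def leg_def U_def Uc_def sigma_def
  by (simp add: proj_uf_hom_simps gen_image_def uscal_def abs_usl3_mult mult.assoc)

definition eqv_invertible :: "UF \<Rightarrow> bool" where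
  "eqv_invertible F \<longleftrightarrow> (\<exists>G. eqv (F * G) 1 \<and> eqv (G * F) 1)"

lemma eqv_invertible_mult:
  assumes "eqv_invertible F" "eqv_invertible F'"
  shows "eqv_invertible (F * F')"
proof -
  obtain G G' where "proj F * proj G = 1" "proj G * proj F = 1"
    "proj F' * proj G' = 1" "proj G' * proj F' = 1"
    using assms by (auto simp: eqv_invertible_def eqv_iff_proj_eq proj_mult proj_1)
  then have "proj (F * F') * proj (G' * G) = 1" "proj (G' * G) * proj (F * F') = 1"
    by (simp_all add: proj_mult mult.assoc) (simp_all add: mult.assoc[symmetric])
  then show ?thesis
    unfolding eqv_invertible_def eqv_iff_proj_eq proj_1 proj_mult[symmetric] by blast
qed

lemma eqv_invertible_fexp:
  assumes "fps_nth X 0 = 0"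
  shows "eqv_invertible (fexp X)"
proof -
  have "proj (- X) = - proj X"
    by (rule fps_ext) (simp add: uminus_usl3.abs_eq)
  then show ?thesis
    using assms usl3.exp_fps_uminus[of "proj X"]
    by (auto simp: eqv_invertible_def eqv_iff_proj_eq proj_mult proj_1 proj_fexp
        intro!: exI[of _ "fexp (- X)"])
qed

lemma eqv_invertible_F_JE: "eqv_invertible (F_JE c)"
  and eqv_invertible_F_RE: "eqv_invertible (F_RE z)"
  unfolding F_JE_def F_RE_def sigma_def sigmaA_def tens2_def
  by (intro eqv_invertible_mult eqv_invertible_fexp; simp add: leg_def)+

lemma gen_image_structure_maps:
  "gen_image (\<lambda>(i, x). L i x) 0 x = gen 0 x"
  "gen_image (\<lambda>(i, x). L i x) 1 x = gen 1 x"
  "gen_image (\<lambda>(i, x). L (i + 1) x) 0 x = gen 1 x"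
  "gen_image (\<lambda>(i, x). L (i + 1) x) 1 x = gen 2 x"
  "gen_image (\<lambda>(i, x). if i = 0 then L 0 x + L 1 x else L (i + 1) x) 0 x = gen 0 x + gen 1 x"
  "gen_image (\<lambda>(i, x). if i = 0 then L 0 x + L 1 x else L (i + 1) x) 1 x = gen 2 x"
  "gen_image (\<lambda>(i, x). if i = 0 then L 0 x else if i = 1 then L 1 x + L 2 x else L (i + 1) x) 0 x =
    gen 0 x"
  "gen_image (\<lambda>(i, x). if i = 0 then L 0 x else if i = 1 then L 1 x + L 2 x else L (i + 1) x) 1 x =
    gen 1 x + gen 2 x"
  "gen_image (\<lambda>(i, x). if i = 0 then 0 else L (i - 1) x) 0 x = 0"
  "gen_image (\<lambda>(i, x). if i = 0 then 0 else L (i - 1) x) 1 x = gen 0 x"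
  "gen_image (\<lambda>(i, x). if i = 1 then 0 else if i = 0 then L 0 x else L (i - 1) x) 0 x = gen 0 x"
  "gen_image (\<lambda>(i, x). if i = 1 then 0 else if i = 0 then L 0 x else L (i - 1) x) 1 x = 0"
  by (simp_all add: gen_image_def gen_def abs_usl3_add numeral_2_eq_2)

lemma is_twistI:
  assumes "eqv_invertible F"
    and "proj (leg12 F) * proj (Delta_id F) = proj (leg23 F) * proj (id_Delta F)"
    and "proj (eps_id F) = 1" "proj (id_eps F) = 1"
  shows "is_twist F"
  using assms by (simp add: is_twist_def eqv_invertible_def eqv_iff_proj_eq proj_mult proj_1)

lemma is_twist_F_JE: "is_twist (F_JE c)"
proof (rule is_twistI[OF eqv_invertible_F_JE])
  have "(jordan_factor (gK 0) (cs c * gA 1) * ext_factor (gA 0) (gB 1) * jordan_factor (gH 0) (gE 1)) *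
      (jordan_factor (gK 0 + gK 1) (cs c * gA 2) *
        ext_factor (gA 0 + gA 1) (gB 2) * jordan_factor (gH 0 + gH 1) (gE 2)) =
    (jordan_factor (gK 1) (cs c * gA 2) * ext_factor (gA 1) (gB 2) * jordan_factor (gH 1) (gE 2)) *
      (jordan_factor (gK 0) (cs c * (gA 1 + gA 2)) *
        ext_factor (gA 0) (gB 1 + gB 2) * jordan_factor (gH 0) (gE 1 + gE 2))"
    using twist_product[OF ext_jordan_cocycle JE_perp_factor_commute[unfolded commute_def]
        JE_perp_factor_cocycle JE_perp_factor_intertwine]
    by (simp only: mult.assoc)
  then show "proj (leg12 (F_JE c)) * proj (Delta_id (F_JE c)) =
      proj (leg23 (F_JE c)) * proj (id_Delta (F_JE c))"
    unfolding leg12_def Delta_id_def leg23_def id_Delta_def proj_uf_hom_F_JE gen_image_structure_maps .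
  show "proj (eps_id (F_JE c)) = 1" "proj (id_eps (F_JE c)) = 1"
    unfolding eps_id_def id_eps_def proj_uf_hom_F_JE gen_image_structure_maps by simp_all
qed

lemma is_twist_F_RE: "is_twist (F_RE z)"
proof (rule is_twistI[OF eqv_invertible_F_RE])
  have "(jordan_factor (cs z * gK 0) (gE 1) * ext_factor (gA 0) (gB 1) * jordan_factor (gH 0) (gE 1)) *
      (jordan_factor (cs z * (gK 0 + gK 1)) (gE 2) *
        ext_factor (gA 0 + gA 1) (gB 2) * jordan_factor (gH 0 + gH 1) (gE 2)) =
    (jordan_factor (cs z * gK 1) (gE 2) * ext_factor (gA 1) (gB 2) * jordan_factor (gH 1) (gE 2)) *
      (jordan_factor (cs z * gK 0) (gE 1 + gE 2) *
        ext_factor (gA 0) (gB 1 + gB 2) * jordan_factor (gH 0) (gE 1 + gE 2))"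
    using twist_product[OF ext_jordan_cocycle RE_perp_factor_commute[unfolded commute_def]
        RE_perp_factor_cocycle RE_perp_factor_intertwine]
    by (simp only: mult.assoc)
  then show "proj (leg12 (F_RE z)) * proj (Delta_id (F_RE z)) =
      proj (leg23 (F_RE z)) * proj (id_Delta (F_RE z))"
    unfolding leg12_def Delta_id_def leg23_def id_Delta_def proj_uf_hom_F_RE gen_image_structure_maps .
  show "proj (eps_id (F_RE z)) = 1" "proj (id_eps (F_RE z)) = 1"
    unfolding eps_id_def id_eps_def proj_uf_hom_F_RE gen_image_structure_maps by simp_all
qed

theorem mainTheorem9:
  fixes c \<zeta> :: complex
  shows "is_twist (F_JE c) \<and> is_twist (F_RE \<zeta>)"
  using is_twist_F_JE is_twist_F_RE by blast

end
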